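(* Let $y\ge 1$ and $m\ge 2$ be integers. Consider the random walk $(X_t)_{t\ge 0}$ on $\mathbb{Z}$ with $X_0=m-1$ whose steps are independent and equal to $+y$ or $-1$, each with probability $\tfrac12$, stopped at the first time $\tau$ at which $X_\tau\in\{0\}\cup\{m,m+1,\dots,m+y-1\}$. For $k\ge 0$ let $\ell_k$ be the probability that $\tau<\infty$, $X_\tau=0$, and exactly $k$ of the first $\tau$ steps are $+y$ steps, and set $$p_l(z)=\sum_{k\ge 0}\ell_k\, z^{yk}.$$ For an integer $k$ define $$u[y,k](z)=\sum_{\substack{n\ge 0\\ (y+1)n-k<0}}\frac{z^{yn}}{2^{(y+1)n+1-k}}\binom{(y+1)n-k}{n}.$$ Then, as formal power series in $z$ (equivalently, as analytic functions for $|z|$ small), $$p_l(z)=\frac{1}{u[y,m](z)}.$$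
   Context: For an integer $a$ (possibly negative) and $n\ge 0$, $\binom{a}{n}=a(a-1)\cdots(a-n+1)/n!$. The sum defining $u[y,k]$ is finite, and is $0$ when it is empty. Before absorption the walk stays in $\{1,\dots,m-1\}$, so a $+y$ step from there lands in $\{2,\dots,m+y-1\}$ and the walk cannot jump over the right absorbing set $\{m,\dots,m+y-1\}$. Equivalently, $p_l(z)=z^{-(m-1)}\sum_j P(X_\tau=0,\ \text{exactly } j \text{ steps are } -1)\,z^j$, i.e. $z$ marks backward steps, normalized by the minimal number $m-1$ of backward steps. (This is the probability of being absorbed at the left barrier $0$, for a walk started next to the right barrier.) *)

theory Defs
  imports "HOL-Analysis.Analysis" "HOL-Computational_Algebra.Formal_Power_Series"
begin

(* A path is a list of steps: True = step +y, False = step -1. *)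
definition walk_pos :: "nat \<Rightarrow> nat \<Rightarrow> bool list \<Rightarrow> int" where
  "walk_pos y m xs = int m - 1 + int y * int (length (filter id xs))
                     - int (length (filter Not xs))"

definition absorbing :: "nat \<Rightarrow> nat \<Rightarrow> int set" where
  "absorbing y m = {0} \<union> {int m .. int m + int y - 1}"

(* finite step sequences realizing the event: tau = length xs, X_tau = 0,
   and no earlier absorption; with exactly k up-steps *)
definition left_paths :: "nat \<Rightarrow> nat \<Rightarrow> nat \<Rightarrow> bool list set" where
  "left_paths y m k = {xs. (\<forall>j < length xs. walk_pos y m (take j xs) \<notin> absorbing y m)
       \<and> walk_pos y m xs = 0 \<and> length (filter id xs) = k}"

(* probability of the event: sum of (1/2)^length over realizing paths *)
definition ell :: "nat \<Rightarrow> nat \<Rightarrow> nat \<Rightarrow> real" where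
  "ell y m k = infsum (\<lambda>xs. (1/2::real) ^ length xs) (left_paths y m k)"

definition p_l :: "nat \<Rightarrow> nat \<Rightarrow> real fps" where
  "p_l y m = Abs_fps (\<lambda>i. if y dvd i then ell y m (i div y) else 0)"

definition u_fps :: "nat \<Rightarrow> int \<Rightarrow> real fps" where
  "u_fps y k = Abs_fps (\<lambda>i. if y dvd i \<and> (int y + 1) * int (i div y) - k < 0
      then (of_int ((int y + 1) * int (i div y) - k) gchoose (i div y))
           / (2::real) powi ((int y + 1) * int (i div y) + 1 - k)
      else 0)"

end

(* Let f_x be the generating function of absorption at 0 for the walk started at x. First-step
   analysis gives f_x = (f_(x-1) + z^y f_(x+y)) / 2 for 0 < x < m, with f_0 = 1 and f_x = 0 on the
   right barrier. By Pascal's rule, x \<mapsto> u[y, m - x] satisfies the same recurrence, and u[y, j] = 0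
   for j \<le> 0. Hence x \<mapsto> f_x u[y,m] - u[y, m - x] solves the homogeneous boundary value problem,
   whose only solution is zero; at x = m - 1 this reads f_(m-1) u[y,m] = u[y,1] = 1. *)

theory Submission
  imports Defs
begin

unbundle no vec_syntax
unbundle fps_syntax

definition fps_spread :: "nat \<Rightarrow> (nat \<Rightarrow> 'a::zero) \<Rightarrow> 'a fps" where
  "fps_spread y g = Abs_fps (\<lambda>i. if y dvd i then g (i div y) else 0)"

lemma fps_spread_nth: "fps_spread y g $ i = (if y dvd i then g (i div y) else 0)"
  by (simp add: fps_spread_def)

lemma fps_spread_add:
  "fps_spread y (\<lambda>n. g n + h n :: 'a::monoid_add) = fps_spread y g + fps_spread y h"
  by (rule fps_ext) (simp add: fps_spread_nth)

lemma fps_const_mult_spread: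
  "fps_const (c::'a::ring_1) * fps_spread y g = fps_spread y (\<lambda>n. c * g n)"
  by (rule fps_ext) (simp add: fps_spread_nth)

lemma fps_spread_delta: "fps_spread y (\<lambda>n. if n = 0 then c else 0) = fps_const c"
proof (rule fps_ext)
  fix i
  have "y dvd i \<and> i div y = 0 \<longleftrightarrow> i = 0"
    by (auto simp: dvd_def split: if_splits)
  then show "fps_spread y (\<lambda>n. if n = 0 then c else 0) $ i = fps_const c $ i"
    by (auto simp: fps_spread_nth)
qed

lemma fps_X_power_mult_spread:
  assumes "y > 0"
  shows "fps_X ^ y * fps_spread y g = fps_spread y (\<lambda>n. if n = 0 then 0 else g (n - 1))"
proof (rule fps_ext)
  fix i :: nat
  show "(fps_X ^ y * fps_spread y g) $ i = fps_spread y (\<lambda>n. if n = 0 then 0 else g (n - 1)) $ i"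
  proof (cases "i < y")
    case True
    then have "y dvd i \<longleftrightarrow> i = 0"
      using assms by (auto dest: dvd_imp_le)
    with True show ?thesis
      by (simp add: fps_X_power_mult_nth fps_spread_nth)
  next
    case False
    then obtain j where "i = j + y"
      using le_Suc_ex by (metis add.commute not_less)
    with assms show ?thesis
      by (simp add: fps_X_power_mult_nth fps_spread_nth)
  qed
qed

text \<open>Coefficient \<open>i\<close> at \<open>x\<close> is determined by coefficient \<open>i\<close> at \<open>x - 1\<close> and coefficient
  \<open>i - y\<close> at \<open>x + y\<close>, so induct on \<open>i\<close> and, for fixed \<open>i\<close>, on \<open>x\<close> upwards from the left boundary.\<close>

lemma boundary_value_problem_unique:
  fixes D :: "int \<Rightarrow> 'a::comm_ring_1 fps" and m :: int
  assumes "y > 0"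
    and left: "D 0 = 0"
    and right: "\<And>x. m \<le> x \<Longrightarrow> x < m + int y \<Longrightarrow> D x = 0"
    and interior: "\<And>x. 1 \<le> x \<Longrightarrow> x < m \<Longrightarrow>
      D x = fps_const a * D (x - 1) + fps_const b * (fps_X ^ y * D (x + int y))"
    and "0 \<le> x" "x < m + int y"
  shows "D x = 0"
proof -
  have "\<forall>x. 0 \<le> x \<and> x < m + int y \<longrightarrow> D x $ i = 0" for i
  proof (induction i rule: less_induct)
    case (less i)
    have interior_zero: "D (int n) $ i = 0" if "int n < m" for n
      using that
    proof (induction n)
      case 0
      then show ?case using left by simp
    next
      case (Suc n)
      have "D (int (Suc n)) = fps_const a * D (int n) + fps_const b * (fps_X ^ y * D (int (Suc n) + int y))"
        using interior[of "int (Suc n)"] Suc.prems by simp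
      moreover have "D (int n) $ i = 0"
        using Suc by simp
      moreover have "D (int (Suc n) + int y) $ (i - y) = 0" if "i \<ge> y"
        using less.IH[of "i - y"] that \<open>y > 0\<close> Suc.prems by simp
      ultimately show ?case
        by (simp add: fps_X_power_mult_nth)
    qed
    show ?case
    proof (intro allI impI)
      fix x
      assume "0 \<le> x \<and> x < m + int y"
      then show "D x $ i = 0"
        using interior_zero[of "nat x"] right[of x] by (cases "x < m") auto
    qed
  qed
  with assms show ?thesis
    by (intro fps_ext) simp
qed

text \<open>Pascal's rule survives truncation to negative upper indices because
  \<open>((-1) gchoose n) + ((-1) gchoose Suc n) = 0\<close>.\<close>

lemma truncated_gbinomial_Suc_Suc:
  fixes A :: int
  shows "(if A + 1 < 0 then of_int (A + 1) gchoose Suc n else 0)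
       = (if A < 0 then (of_int A gchoose n) + (of_int A gchoose Suc n) else (0::'a::field_char_0))"
proof -
  consider "A < -1" | "A = -1" | "A \<ge> 0" by linarith
  then show ?thesis
  proof cases
    case 1
    then show ?thesis using gbinomial_Suc_Suc[of "of_int A :: 'a" n] by simp
  next
    case 2
    have "((-1::'a) gchoose k) = (-1) ^ k" for k
      using gbinomial_minus[of "1::'a" k] binomial_gbinomial[of k k] by simp
    with 2 show ?thesis by simp
  qed simp
qed

definition u_coeff :: "nat \<Rightarrow> int \<Rightarrow> nat \<Rightarrow> real" where
  "u_coeff y k n = (if (int y + 1) * int n - k < 0
      then (of_int ((int y + 1) * int n - k) gchoose n) / 2 powi ((int y + 1) * int n + 1 - k)
      else 0)"

lemma u_fps_eq_spread: "u_fps y k = fps_spread y (u_coeff y k)"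
  unfolding u_fps_def fps_spread_def u_coeff_def by (rule fps_ext) simp

lemma u_coeff_recurrence:
  assumes "j \<ge> 1"
  shows "2 * u_coeff y j n = u_coeff y (j + 1) n + (if n = 0 then 0 else u_coeff y (j - int y) (n - 1))"
proof (cases n)
  case 0
  with assms show ?thesis
    by (simp add: u_coeff_def power_int_minus power_int_diff inverse_eq_divide)
next
  case (Suc n')
  define A where "A = (int y + 1) * int n - j - 1"
  have exponents: "(int y + 1) * int n - j = A + 1" "(int y + 1) * int n + 1 - j = A + 1 + 1"
    "(int y + 1) * int n - (j + 1) = A" "(int y + 1) * int n + 1 - (j + 1) = A + 1"
    "(int y + 1) * int n' - (j - int y) = A" "(int y + 1) * int n' + 1 - (j - int y) = A + 1"
    using Suc by (simp_all add: A_def algebra_simps)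
  have "2 * u_coeff y j n = (if A + 1 < 0 then of_int (A + 1) gchoose n else 0) / 2 powi (A + 1)"
    unfolding u_coeff_def exponents by (simp add: power_int_add)
  also have "\<dots> = (if A + 1 < 0 then of_int (A + 1) gchoose Suc n' else 0) / 2 powi (A + 1)"
    using Suc by simp
  also have "\<dots> = (if A < 0 then (of_int A gchoose n') + (of_int A gchoose Suc n') else 0) / 2 powi (A + 1)"
    by (simp only: truncated_gbinomial_Suc_Suc)
  also have "\<dots> = u_coeff y (j + 1) n + u_coeff y (j - int y) n'"
    unfolding u_coeff_def exponents using Suc by (simp add: add_divide_distrib)
  finally show ?thesis
    using Suc by simp
qed

lemma u_fps_recurrence:
  assumes "y > 0" "j \<ge> 1"
  shows "u_fps y j = fps_const (1/2) * u_fps y (j + 1) + fps_const (1/2) * (fps_X ^ y * u_fps y (j - int y))"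
proof -
  have coeffs: "u_coeff y j
      = (\<lambda>n. 1/2 * u_coeff y (j + 1) n + 1/2 * (if n = 0 then 0 else u_coeff y (j - int y) (n - 1)))"
  proof
    fix n
    show "u_coeff y j n = 1/2 * u_coeff y (j + 1) n + 1/2 * (if n = 0 then 0 else u_coeff y (j - int y) (n - 1))"
      using u_coeff_recurrence[OF assms(2), of y n] by simp
  qed
  show ?thesis
    unfolding u_fps_eq_spread fps_X_power_mult_spread[OF assms(1)] fps_const_mult_spread
      fps_spread_add[symmetric] coeffs ..
qed

lemma u_fps_nonpos:
  assumes "k \<le> 0"
  shows "u_fps y k = 0"
proof -
  have "\<not> (int y + 1) * int n - k < 0" for n
    using order_trans[OF assms] by (simp add: not_less)
  then have "u_coeff y k = (\<lambda>_. 0)"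
    by (simp add: u_coeff_def fun_eq_iff)
  then show ?thesis
    by (intro fps_ext) (simp add: u_fps_eq_spread fps_spread_nth)
qed

lemma u_fps_one: "u_fps y 1 = 1"
proof -
  have "(int y + 1) * int n - 1 < 0 \<longleftrightarrow> n = 0" for n
    by (cases n) (simp_all add: distrib_left not_less add_nonneg_nonneg)
  then have "u_coeff y 1 = (\<lambda>n. if n = 0 then 1 else 0)"
    by (simp add: u_coeff_def fun_eq_iff)
  then show ?thesis
    by (simp add: u_fps_eq_spread fps_spread_delta)
qed

definition walk_from :: "nat \<Rightarrow> int \<Rightarrow> bool list \<Rightarrow> int" where
  "walk_from y x xs = x + int y * int (length (filter id xs)) - int (length (filter Not xs))"

lemma walk_from_Nil [simp]: "walk_from y x [] = x"
  by (simp add: walk_from_def)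

lemma walk_from_Cons [simp]:
  "walk_from y x (b # xs) = walk_from y (if b then x + int y else x - 1) xs"
  by (simp add: walk_from_def algebra_simps)

definition absorbed_paths :: "nat \<Rightarrow> nat \<Rightarrow> int \<Rightarrow> nat \<Rightarrow> bool list set" where
  "absorbed_paths y m x k = {xs. (\<forall>j < length xs. walk_from y x (take j xs) \<notin> absorbing y m)
       \<and> walk_from y x xs = 0 \<and> length (filter id xs) = k}"

lemma left_paths_eq_absorbed_paths: "left_paths y m k = absorbed_paths y m (int m - 1) k"
  by (simp add: left_paths_def absorbed_paths_def walk_pos_def walk_from_def)

lemma finite_absorbed_paths: "finite (absorbed_paths y m x k)"
proof (rule finite_subset)
  show "absorbed_paths y m x k \<subseteq> {xs. set xs \<subseteq> UNIV \<and> length xs = nat (x + int y * int k) + k}"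
  proof
    fix xs
    assume "xs \<in> absorbed_paths y m x k"
    moreover have "length (filter id xs) + length (filter Not xs) = length xs"
      using sum_length_filter_compl[of id xs] by simp
    ultimately show "xs \<in> {xs. set xs \<subseteq> UNIV \<and> length xs = nat (x + int y * int k) + k}"
      by (auto simp: absorbed_paths_def walk_from_def)
  qed
qed (rule finite_lists_length_eq, simp)

lemma Nil_in_absorbed_paths: "[] \<in> absorbed_paths y m x k \<longleftrightarrow> x = 0 \<and> k = 0"
  by (simp add: absorbed_paths_def)

lemma Cons_in_absorbed_paths:
  "b # xs \<in> absorbed_paths y m x k \<longleftrightarrow> x \<notin> absorbing y m \<and>
     (if b then k \<noteq> 0 \<and> xs \<in> absorbed_paths y m (x + int y) (k - 1)
      else xs \<in> absorbed_paths y m (x - 1) k)"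
  by (cases b) (auto simp: absorbed_paths_def All_less_Suc2)

lemma absorbed_paths_absorbing:
  assumes "x \<in> absorbing y m"
  shows "absorbed_paths y m x k = (if x = 0 \<and> k = 0 then {[]} else {})"
proof -
  have "xs \<in> absorbed_paths y m x k \<longleftrightarrow> xs = [] \<and> x = 0 \<and> k = 0" for xs
    using assms by (cases xs) (simp_all add: Nil_in_absorbed_paths Cons_in_absorbed_paths)
  then show ?thesis
    by auto
qed

lemma absorbed_paths_first_step:
  assumes "x \<notin> absorbing y m"
  shows "absorbed_paths y m x k = Cons False ` absorbed_paths y m (x - 1) k \<union>
     (if k = 0 then {} else Cons True ` absorbed_paths y m (x + int y) (k - 1))"
proof -
  have "x \<noteq> 0"
    using assms by (auto simp: absorbing_def)
  then have "xs \<in> absorbed_paths y m x k \<longleftrightarrow>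
      xs \<in> Cons False ` absorbed_paths y m (x - 1) k \<union>
      (if k = 0 then {} else Cons True ` absorbed_paths y m (x + int y) (k - 1))" for xs
    using assms by (cases xs) (auto simp: Nil_in_absorbed_paths Cons_in_absorbed_paths)
  then show ?thesis
    by blast
qed

definition absorption_prob :: "nat \<Rightarrow> nat \<Rightarrow> int \<Rightarrow> nat \<Rightarrow> real" where
  "absorption_prob y m x k = (\<Sum>xs\<in>absorbed_paths y m x k. (1/2) ^ length xs)"

lemma ell_eq_absorption_prob: "ell y m k = absorption_prob y m (int m - 1) k"
  by (simp add: ell_def absorption_prob_def left_paths_eq_absorbed_paths finite_absorbed_paths)

lemma absorption_prob_absorbing:
  "x \<in> absorbing y m \<Longrightarrow> absorption_prob y m x k = (if x = 0 \<and> k = 0 then 1 else 0)"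
  by (simp add: absorption_prob_def absorbed_paths_absorbing)

lemma absorption_prob_first_step:
  assumes "x \<notin> absorbing y m"
  shows "absorption_prob y m x k = 1/2 * absorption_prob y m (x - 1) k
     + 1/2 * (if k = 0 then 0 else absorption_prob y m (x + int y) (k - 1))"
proof -
  have prepend: "(\<Sum>xs\<in>Cons b ` S. (1/2::real) ^ length xs) = 1/2 * (\<Sum>xs\<in>S. (1/2) ^ length xs)" for b S
    by (simp add: sum.reindex sum_distrib_left)
  show ?thesis
  proof (cases "k = 0")
    case True
    then show ?thesis
      unfolding absorption_prob_def absorbed_paths_first_step[OF assms] by (simp add: prepend)
  next
    case False
    have "Cons False ` absorbed_paths y m (x - 1) k \<inter> Cons True ` absorbed_paths y m (x + int y) (k - 1) = {}"
      by auto
    with False show ?thesis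
      unfolding absorption_prob_def absorbed_paths_first_step[OF assms]
      by (simp add: sum.union_disjoint finite_absorbed_paths prepend)
  qed
qed

definition absorption_gf :: "nat \<Rightarrow> nat \<Rightarrow> int \<Rightarrow> real fps" where
  "absorption_gf y m x = fps_spread y (absorption_prob y m x)"

lemma p_l_eq_absorption_gf: "p_l y m = absorption_gf y m (int m - 1)"
  unfolding p_l_def absorption_gf_def fps_spread_def ell_eq_absorption_prob ..

lemma absorption_gf_zero: "absorption_gf y m 0 = 1"
proof -
  have "absorption_prob y m 0 = (\<lambda>k. if k = 0 then 1 else 0)"
    by (simp add: absorption_prob_absorbing absorbing_def fun_eq_iff)
  then show ?thesis
    by (simp add: absorption_gf_def fps_spread_delta)
qed

lemma absorption_gf_absorbing:
  assumes "x \<in> absorbing y m" "x \<noteq> 0"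
  shows "absorption_gf y m x = 0"
  by (rule fps_ext) (simp add: absorption_gf_def fps_spread_nth absorption_prob_absorbing assms)

lemma absorption_gf_first_step:
  assumes "y > 0" "x \<notin> absorbing y m"
  shows "absorption_gf y m x = fps_const (1/2) * absorption_gf y m (x - 1)
     + fps_const (1/2) * (fps_X ^ y * absorption_gf y m (x + int y))"
  unfolding absorption_gf_def fps_X_power_mult_spread[OF assms(1)] fps_const_mult_spread
    fps_spread_add[symmetric]
  by (rule arg_cong[where f = "fps_spread y"]) (simp add: fun_eq_iff absorption_prob_first_step[OF assms(2)])

lemma absorption_gf_mult_u_fps:
  assumes "y > 0" "m > 0"
  shows "absorption_gf y m (int m - 1) * u_fps y (int m) = 1"
proof -
  define D where "D x = absorption_gf y m x * u_fps y (int m) - u_fps y (int m - x)" for x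
  have "D (int m - 1) = 0"
  proof (rule boundary_value_problem_unique[of y D "int m" "1/2" "1/2"])
    show "D 0 = 0"
      by (simp add: D_def absorption_gf_zero)
  next
    fix x
    assume "int m \<le> x" "x < int m + int y"
    then show "D x = 0"
      using assms(2) by (simp add: D_def absorption_gf_absorbing absorbing_def u_fps_nonpos)
  next
    fix x
    assume x: "1 \<le> x" "x < int m"
    then have "x \<notin> absorbing y m"
      by (simp add: absorbing_def)
    moreover have "u_fps y (int m - x) = fps_const (1/2) * u_fps y (int m - (x - 1))
        + fps_const (1/2) * (fps_X ^ y * u_fps y (int m - (x + int y)))"
      using u_fps_recurrence[OF assms(1), of "int m - x"] x by (simp add: algebra_simps)
    ultimately show "D x = fps_const (1/2) * D (x - 1) + fps_const (1/2) * (fps_X ^ y * D (x + int y))"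
      unfolding D_def using absorption_gf_first_step[OF assms(1)] by (simp add: algebra_simps)
  qed (use assms in simp_all)
  then show ?thesis
    by (simp add: D_def u_fps_one)
qed

theorem mainTheorem1:
  fixes y m :: nat
  assumes "y \<ge> 1" and "m \<ge> 2"
  shows "p_l y m = inverse (u_fps y (int m))"
proof -
  have "u_fps y (int m) * p_l y m = 1"
    using absorption_gf_mult_u_fps[of y m] assms by (simp add: p_l_eq_absorption_gf mult.commute)
  then show ?thesis
    by (rule fps_inverse_unique[symmetric])
qed

end
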